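(* Let $X$ be a $T_1$ topological space. An ideal $I$ of $T''(X)$ is a $z$-ideal if and only if for all $f\in T''(X)$ and $g\in I$ with $Z(f)\supseteq Z(g)$ we have $f\in I$.
   Context: $C(X)$ is the ring of real-valued continuous functions on $X$; a cozero set is a set $\{x: h(x)\neq 0\}$ with $h\in C(X)$. $T''(X)$ is the ring (under pointwise operations) of all functions $f\colon X\to\mathbb{R}$ for which there is a dense cozero set $U$ of $X$ with $f|_U$ continuous. $Z(f)=\{x\in X: f(x)=0\}$. In a commutative ring $R$ with unity, $M(a)$ is the intersection of all maximal ideals containing $a$, and an ideal $I$ is a $z$-ideal if $M(a)\subseteq I$ for all $a\in I$. *)

theory Defs
  imports "HOL-Analysis.Analysis" "HOL-Algebra.Ideal"
begin

definition cozero_set :: "('a::topological_space) set \<Rightarrow> bool" where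
  "cozero_set U \<longleftrightarrow> (\<exists>h::'a \<Rightarrow> real. continuous_on UNIV h \<and> U = {x. h x \<noteq> 0})"

definition Tpp :: "(('a::topological_space) \<Rightarrow> real) set" where
  "Tpp = {f. \<exists>U. cozero_set U \<and> closure U = UNIV \<and> continuous_on U f}"

definition Tpp_ring :: "(('a::topological_space) \<Rightarrow> real) ring" where
  "Tpp_ring = \<lparr>carrier = Tpp, monoid.mult = (\<lambda>f g x. f x * g x), one = (\<lambda>_. 1),
               zero = (\<lambda>_. 0), add = (\<lambda>f g x. f x + g x)\<rparr>"

definition zset :: "('a \<Rightarrow> real) \<Rightarrow> 'a set" where
  "zset f = {x. f x = 0}"

definition Mset :: "('b, 'm) ring_scheme \<Rightarrow> 'b \<Rightarrow> 'b set" where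
  "Mset R a = carrier R \<inter> \<Inter>{P. maximalideal P R \<and> a \<in> P}"

definition z_ideal :: "('b, 'm) ring_scheme \<Rightarrow> 'b set \<Rightarrow> bool" where
  "z_ideal R I \<longleftrightarrow> ideal I R \<and> (\<forall>a\<in>I. Mset R a \<subseteq> I)"

end

theory Submission
  imports Defs
begin

text \<open>
  For g in T''(X), the intersection M(g) of the maximal ideals containing g is exactly the set
  of f in T''(X) with Z(g) \<subseteq> Z(f); the corollary is this identity read into the definition
  of a z-ideal. One inclusion holds because, for every point x, the functions vanishing at x form
  a maximal ideal. For the other, if f lay outside a maximal ideal M containing g, then
  1 = m + r f with m in M; where g vanishes so does f, hence m = 1 there, so m^2 + g^2 is a
  nowhere vanishing element of M, i.e. a unit, which is absurd.
\<close>

lemma (in ideal) Units_mem_imp_carrier: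
  assumes "u \<in> I" "u \<in> Units R"
  shows "I = carrier R"
proof -
  have "inv u \<otimes> u \<in> I"
    using assms by (intro I_l_closed) auto
  then show ?thesis
    using assms(2) by (intro one_imp_carrier) simp
qed

lemma (in cring) maximalideal_one_decomp:
  assumes "maximalideal M R" "f \<in> carrier R" "f \<notin> M"
  obtains m r where "m \<in> M" "r \<in> carrier R" "\<one> = m \<oplus> r \<otimes> f"
proof -
  interpret M: maximalideal M R by fact
  let ?J = "M <+>\<^bsub>R\<^esub> PIdl f"
  have J: "ideal ?J R"
    using assms(2) by (intro add_ideals M.is_ideal cgenideal_ideal)
  have zero_PIdl: "\<zero> \<in> PIdl f"
    using additive_subgroup.zero_closed[OF ideal.axioms(1)[OF cgenideal_ideal[OF assms(2)]]] .
  have "m \<in> ?J" if "m \<in> M" for m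
  proof -
    have "m \<oplus> \<zero> \<in> ?J"
      using that zero_PIdl unfolding set_add_def' by blast
    then show ?thesis
      using that M.a_subset by auto
  qed
  moreover have "f \<in> ?J"
  proof -
    have "\<zero> \<oplus> f \<in> ?J"
      using M.zero_closed cgenideal_self[OF assms(2)] unfolding set_add_def' by blast
    then show ?thesis
      using assms(2) by simp
  qed
  ultimately have "?J = carrier R"
    using M.I_maximal[OF J] additive_subgroup.a_subset[OF ideal.axioms(1)[OF J]] assms(3)
    by blast
  then have "\<one> \<in> ?J"
    by simp
  then show ?thesis
    using that unfolding set_add_def' cgenideal_def by blast
qed

lemma cozero_set_imp_open: "cozero_set U \<Longrightarrow> open U"
  unfolding cozero_set_def
  by (auto intro!: open_Collect_neq simp: continuous_on_eq_continuous_at)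

lemma cozero_set_UNIV: "cozero_set UNIV"
  unfolding cozero_set_def by (rule exI[of _ "\<lambda>_. 1"]) auto

lemma cozero_set_Int:
  assumes "cozero_set U" "cozero_set V"
  shows "cozero_set (U \<inter> V)"
proof -
  obtain h k :: "_ \<Rightarrow> real" where
    h: "continuous_on UNIV h" "U = {x. h x \<noteq> 0}" and
    k: "continuous_on UNIV k" "V = {x. k x \<noteq> 0}"
    using assms unfolding cozero_set_def by blast
  have "continuous_on UNIV (\<lambda>x. h x * k x)"
    using h k by (intro continuous_intros)
  moreover have "U \<inter> V = {x. h x * k x \<noteq> 0}"
    using h k by auto
  ultimately show ?thesis
    unfolding cozero_set_def by blast
qed

lemma dense_open_Int:
  assumes "open U" "closure U = UNIV" "closure V = UNIV"
  shows "closure (U \<inter> V) = UNIV"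
proof -
  have "U \<subseteq> closure (U \<inter> V)"
    using open_Int_closure_subset[OF assms(1), of V] assms(3) by simp
  then show ?thesis
    using assms(2) closure_minimal[of U "closure (U \<inter> V)"] by auto
qed

lemma Tpp_binop:
  assumes "f \<in> Tpp" "g \<in> Tpp"
    and "\<And>U. continuous_on U f \<Longrightarrow> continuous_on U g \<Longrightarrow> continuous_on U (\<lambda>x. op (f x) (g x))"
  shows "(\<lambda>x. op (f x) (g x)) \<in> Tpp"
proof -
  obtain U where U: "cozero_set U" "closure U = UNIV" "continuous_on U f"
    using assms(1) unfolding Tpp_def by blast
  obtain V where V: "cozero_set V" "closure V = UNIV" "continuous_on V g"
    using assms(2) unfolding Tpp_def by blast
  have "continuous_on (U \<inter> V) (\<lambda>x. op (f x) (g x))"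
    using U(3) V(3) by (intro assms(3)) (auto intro: continuous_on_subset)
  then show ?thesis
    using cozero_set_Int[OF U(1) V(1)] dense_open_Int[OF cozero_set_imp_open[OF U(1)] U(2) V(2)]
    unfolding Tpp_def by blast
qed

lemma Tpp_add: "f \<in> Tpp \<Longrightarrow> g \<in> Tpp \<Longrightarrow> (\<lambda>x. f x + g x) \<in> Tpp"
  by (rule Tpp_binop) (auto intro: continuous_on_add)

lemma Tpp_mult: "f \<in> Tpp \<Longrightarrow> g \<in> Tpp \<Longrightarrow> (\<lambda>x. f x * g x) \<in> Tpp"
  by (rule Tpp_binop) (auto intro: continuous_on_mult)

lemma Tpp_const: "(\<lambda>_. c) \<in> Tpp"
  using cozero_set_UNIV unfolding Tpp_def by (auto intro: continuous_intros)

lemma Tpp_uminus: "f \<in> Tpp \<Longrightarrow> (\<lambda>x. - f x) \<in> Tpp"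
  using Tpp_mult[OF Tpp_const[of "-1"], of f] by simp

lemma Tpp_inverse:
  assumes "f \<in> Tpp" "\<And>x. f x \<noteq> 0"
  shows "(\<lambda>x. 1 / f x) \<in> Tpp"
proof -
  obtain U where U: "cozero_set U" "closure U = UNIV" "continuous_on U f"
    using assms(1) unfolding Tpp_def by blast
  have "continuous_on U (\<lambda>x. 1 / f x)"
    using U(3) assms(2) by (intro continuous_intros) auto
  then show ?thesis
    using U unfolding Tpp_def by blast
qed

lemma Tpp_ring_simps [simp]:
  "carrier Tpp_ring = Tpp"
  "f \<oplus>\<^bsub>Tpp_ring\<^esub> g = (\<lambda>x. f x + g x)"
  "f \<otimes>\<^bsub>Tpp_ring\<^esub> g = (\<lambda>x. f x * g x)"
  "\<one>\<^bsub>Tpp_ring\<^esub> = (\<lambda>_. 1)"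
  "\<zero>\<^bsub>Tpp_ring\<^esub> = (\<lambda>_. 0)"
  by (simp_all add: Tpp_ring_def)

lemma cring_Tpp_ring: "cring (Tpp_ring :: ('a::topological_space \<Rightarrow> real) ring)"
proof (rule cringI)
  show "abelian_group (Tpp_ring :: ('a \<Rightarrow> real) ring)"
    by (rule abelian_groupI)
      (auto simp: Tpp_add Tpp_const algebra_simps intro!: bexI[OF _ Tpp_uminus])
  show "comm_monoid (Tpp_ring :: ('a \<Rightarrow> real) ring)"
    by (rule comm_monoidI) (auto simp: Tpp_mult Tpp_const algebra_simps)
qed (auto simp: algebra_simps)

lemma Tpp_a_inv: "f \<in> Tpp \<Longrightarrow> \<ominus>\<^bsub>Tpp_ring\<^esub> f = (\<lambda>x. - f x)"
proof -
  assume f: "f \<in> Tpp"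
  interpret cring "Tpp_ring :: ('a::topological_space \<Rightarrow> real) ring"
    by (rule cring_Tpp_ring)
  show "\<ominus>\<^bsub>Tpp_ring\<^esub> f = (\<lambda>x. - f x)"
    by (rule minus_equality) (auto simp: f Tpp_uminus)
qed

lemma Tpp_Units:
  assumes "f \<in> Tpp" "\<And>x. f x \<noteq> 0"
  shows "f \<in> Units Tpp_ring"
  using assms Tpp_inverse[OF assms] unfolding Units_def by (auto intro!: bexI[of _ "\<lambda>x. 1 / f x"])

lemma maximalideal_Tpp_vanishing_at:
  "maximalideal {f \<in> Tpp. f x = 0} (Tpp_ring :: ('a::topological_space \<Rightarrow> real) ring)"
proof -
  interpret cring "Tpp_ring :: ('a \<Rightarrow> real) ring"
    by (rule cring_Tpp_ring)
  let ?P = "{f \<in> (Tpp :: ('a \<Rightarrow> real) set). f x = 0}"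
  have P: "ideal ?P Tpp_ring"
  proof (rule idealI[OF ring_axioms])
    show "subgroup ?P (add_monoid Tpp_ring)"
    proof (rule subgroup.intro)
      show "inv\<^bsub>add_monoid Tpp_ring\<^esub> f \<in> ?P" if "f \<in> ?P" for f
        using that Tpp_a_inv Tpp_uminus unfolding a_inv_def by fastforce
    qed (auto simp: Tpp_add Tpp_const)
  qed (auto simp: Tpp_mult)
  show ?thesis
  proof (rule maximalidealI[OF P])
    show "carrier Tpp_ring \<noteq> ?P"
      using Tpp_const[of 1] by auto
    fix J
    assume J: "ideal J Tpp_ring" "?P \<subseteq> J" "J \<subseteq> carrier Tpp_ring"
    interpret J: ideal J Tpp_ring by fact
    show "J = ?P \<or> J = carrier Tpp_ring"
    proof (cases "J \<subseteq> ?P")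
      case True
      then show ?thesis using J by blast
    next
      case False
      then obtain h where h: "h \<in> J" "h x \<noteq> 0"
        using J by auto
      define c where "c = 1 / h x"
      have "(\<lambda>_. c) \<otimes>\<^bsub>Tpp_ring\<^esub> h \<in> J"
        using h(1) by (intro J.I_l_closed) (simp_all add: Tpp_const)
      moreover have "(\<lambda>y. 1 - c * h y) \<in> ?P"
        using Tpp_add[OF Tpp_const[of 1] Tpp_mult[OF Tpp_const[of "-c"], of h]] h J(3)
        by (auto simp: c_def)
      ultimately have "(\<lambda>_. c) \<otimes>\<^bsub>Tpp_ring\<^esub> h \<oplus>\<^bsub>Tpp_ring\<^esub> (\<lambda>y. 1 - c * h y) \<in> J"
        using J(2) by (intro J.a_closed) auto
      then have "\<one>\<^bsub>Tpp_ring\<^esub> \<in> J"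
        by simp
      then show ?thesis
        using J.one_imp_carrier by blast
    qed
  qed
qed

lemma maximalideal_Tpp_zset_closed:
  assumes "maximalideal M Tpp_ring" "g \<in> M" "f \<in> Tpp" "zset g \<subseteq> zset f"
  shows "f \<in> M"
proof (rule ccontr)
  assume "f \<notin> M"
  interpret cring "Tpp_ring :: ('a::topological_space \<Rightarrow> real) ring"
    by (rule cring_Tpp_ring)
  interpret M: maximalideal M Tpp_ring by fact
  obtain m r where m: "m \<in> M" and "r \<in> Tpp" and one: "(\<lambda>_. 1) = (\<lambda>x. m x + r x * f x)"
    using maximalideal_one_decomp[OF assms(1)] assms(3) \<open>f \<notin> M\<close> by auto
  have m_Tpp: "m \<in> Tpp" and g_Tpp: "g \<in> Tpp"
    using m assms(2) M.a_subset by auto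
  let ?u = "(m \<otimes>\<^bsub>Tpp_ring\<^esub> m) \<oplus>\<^bsub>Tpp_ring\<^esub> (g \<otimes>\<^bsub>Tpp_ring\<^esub> g)"
  have "?u \<in> M"
    using m assms(2) m_Tpp g_Tpp by (intro M.a_closed M.I_r_closed) auto
  moreover have "m x * m x + g x * g x \<noteq> 0" for x
  proof (cases "g x = 0")
    case True
    then have "f x = 0"
      using assms(4) unfolding zset_def by auto
    then have "m x = 1"
      using fun_cong[OF one, of x] by simp
    then show ?thesis
      using True by simp
  next
    case False
    then show ?thesis
      by (simp add: add_nonneg_pos)
  qed
  then have "?u \<in> Units Tpp_ring"
    using m_Tpp g_Tpp by (auto intro!: Tpp_Units Tpp_add Tpp_mult)
  ultimately show False
    using M.Units_mem_imp_carrier M.I_notcarr by blast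
qed

lemma Mset_Tpp_ring:
  assumes "g \<in> Tpp"
  shows "Mset (Tpp_ring :: ('a::topological_space \<Rightarrow> real) ring) g = {f \<in> Tpp. zset g \<subseteq> zset f}"
proof (intro equalityI subsetI)
  fix f
  assume f: "f \<in> Mset (Tpp_ring :: ('a \<Rightarrow> real) ring) g"
  have "x \<in> zset f" if "x \<in> zset g" for x
  proof -
    have "g \<in> {h \<in> Tpp. h x = 0}"
      using assms that unfolding zset_def by simp
    then have "f \<in> {h \<in> (Tpp :: ('a \<Rightarrow> real) set). h x = 0}"
      using f maximalideal_Tpp_vanishing_at unfolding Mset_def by blast
    then show ?thesis
      unfolding zset_def by simp
  qed
  then show "f \<in> {f \<in> Tpp. zset g \<subseteq> zset f}"
    using f unfolding Mset_def by auto
qed (auto simp: Mset_def intro: maximalideal_Tpp_zset_closed)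

theorem corollary5p2:
  fixes I :: "('a::t1_space \<Rightarrow> real) set"
  assumes "ideal I (Tpp_ring :: ('a \<Rightarrow> real) ring)"
  shows "z_ideal (Tpp_ring :: ('a \<Rightarrow> real) ring) I \<longleftrightarrow>
         (\<forall>f\<in>(Tpp :: ('a \<Rightarrow> real) set). \<forall>g\<in>I. zset g \<subseteq> zset f \<longrightarrow> f \<in> I)"
proof -
  have "I \<subseteq> Tpp"
    using additive_subgroup.a_subset[OF ideal.axioms(1)[OF assms]] by simp
  then have "\<forall>g\<in>I. Mset (Tpp_ring :: ('a \<Rightarrow> real) ring) g = {f \<in> Tpp. zset g \<subseteq> zset f}"
    using Mset_Tpp_ring by blast
  then show ?thesis
    using assms unfolding z_ideal_def by blast
qed

end
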